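(* Let $X\in\mathbb{R}^{n\times d}$ have zero-mean columns and satisfy $\frac{1}{n}X^\top X=I_d+\rho(\boldsymbol{e}_i\boldsymbol{e}_j^\top+\boldsymbol{e}_j\boldsymbol{e}_i^\top)$ for some indices $i\neq j$ and $0<\rho<1$, where $\boldsymbol{e}_k$ is the $k$-th standard basis vector. Let $Y=X\theta^*+\epsilon$ with $\theta^*\in\mathbb{R}^d$ and $\epsilon\sim\mathcal{N}(0,\sigma I_n)$. Let $\hat\theta$ be the unregularized least squares solution, i.e. $X^\top X\hat\theta=X^\top Y$, and assume $0<\hat\theta_i<\hat\theta_j$. For $\lambda_1>0,\lambda_2>0$ define $$\theta^1=\arg\min_{\theta\in\mathbb{R}^d}\frac{1}{2n}\|X\theta-Y\|_2^2+\lambda_1\|\theta\|_1,\qquad \theta^{\mathrm{El}}=\arg\min_{\theta\in\mathbb{R}^d}\frac{1}{2n}\|X\theta-Y\|_2^2+\lambda_1\|\theta\|_1+\frac{\lambda_2}{2}\|\theta\|_2^2,$$ and let $c=\dfrac{(1+\lambda_2-\rho^2)\hat\theta_i+\lambda_2\rho\hat\theta_j}{1+\lambda_2-\rho}$. Then: (a) if $\lambda_1<(1+\rho)\hat\theta_i$ then $\theta^1_i>0$ and $\theta^1_j>0$; if $(1+\rho)\hat\theta_i\le\lambda_1<\hat\theta_j+\rho\hat\theta_i$ then $\theta^1_i=0$ and $\theta^1_j>0$; if $\lambda_1\ge\hat\theta_j+\rho\hat\theta_i$ then $\theta^1_i=\theta^1_j=0$; (b) if $\lambda_1<c$ then $\theta^{\mathrm{El}}_i>0$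 and $\theta^{\mathrm{El}}_j>0$; if $c\le\lambda_1<\hat\theta_j+\rho\hat\theta_i$ then $\theta^{\mathrm{El}}_i=0$ and $\theta^{\mathrm{El}}_j>0$; if $\lambda_1\ge\hat\theta_j+\rho\hat\theta_i$ then $\theta^{\mathrm{El}}_i=\theta^{\mathrm{El}}_j=0$. *)

theory Defs
  imports "HOL-Analysis.Analysis"
begin

definition basis_outer :: "'d::finite \<Rightarrow> 'd \<Rightarrow> real^'d^'d" where
  "basis_outer a b = (\<chi> r c. if r = a \<and> c = b then 1 else 0)"

definition l1norm :: "real^'d::finite \<Rightarrow> real" where
  "l1norm v = (\<Sum>k\<in>UNIV. \<bar>v $ k\<bar>)"

definition lasso_obj :: "real^'d::finite^'n::finite \<Rightarrow> real^'n \<Rightarrow> real \<Rightarrow> real^'d \<Rightarrow> real" where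
  "lasso_obj X Y l1 \<theta> =
     (norm (X *v \<theta> - Y))\<^sup>2 / (2 * real CARD('n)) + l1 * l1norm \<theta>"

definition enet_obj :: "real^'d::finite^'n::finite \<Rightarrow> real^'n \<Rightarrow> real \<Rightarrow> real \<Rightarrow> real^'d \<Rightarrow> real" where
  "enet_obj X Y l1 l2 \<theta> =
     (norm (X *v \<theta> - Y))\<^sup>2 / (2 * real CARD('n)) + l1 * l1norm \<theta> + l2 / 2 * (norm \<theta>)\<^sup>2"

end

theory Submission
  imports Defs
begin

(* Because the Gram matrix is n (I + rho (e_i e_j^T + e_j e_i^T)), the least squares loss equals
   |theta - theta_hat|^2 / 2 + rho (theta_i - theta_hat_i) (theta_j - theta_hat_j) up to a constant.
   Both penalized objectives therefore split into a problem in the pair (theta_i, theta_j) plus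
   independent one-variable problems. For |rho| < 1 the pair problem is strongly convex, so a point
   satisfying its subgradient optimality conditions is the unique minimizer; in each range of lambda_1
   such a point is written down explicitly. The lasso is the case lambda_2 = 0, where the threshold c
   becomes (1 + rho) theta_hat_i. *)

lemma basis_outer_mult_vec:
  "(basis_outer a b *v u) $ k = (if k = a then u $ b else (0::real))"
  by (simp add: basis_outer_def matrix_vector_mult_def if_distrib if_distribR sum.delta cong: if_cong)

lemma inner_basis_outer: "inner u (basis_outer a b *v u) = u $ a * (u $ b :: real)"
proof -
  have "inner u (basis_outer a b *v u) = (\<Sum>k\<in>UNIV. if k = a then u $ a * u $ b else 0)"
    unfolding inner_vec_def basis_outer_mult_vec by (rule sum.cong) auto
  then show ?thesis
    by simp
qed

lemma inner_basis_outer_sym: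
  fixes u :: "real^'d::finite"
  shows "inner u ((basis_outer i j + basis_outer j i) *v u) = 2 * u $ i * u $ j"
  by (simp add: matrix_vector_mult_add_rdistrib inner_add_right inner_basis_outer mult.commute)

lemma inner_mult_vec_transpose:
  "inner (X *v u) w = inner u (transpose X *v (w::real^'n::finite))"
  by (metis dot_lmul_matrix vector_transpose_matrix)

lemma norm_mult_vec_sq:
  fixes X :: "real^'d::finite^'n::finite"
  shows "(norm (X *v u))\<^sup>2 = inner u ((transpose X ** X) *v u)"
  by (simp add: power2_norm_eq_inner inner_mult_vec_transpose matrix_vector_mul_assoc
      del: transpose_matrix_vector)

lemma norm_vec_power2: "(norm (v :: real^'n::finite))\<^sup>2 = (\<Sum>k\<in>UNIV. (v $ k)\<^sup>2)"
  by (simp add: norm_vec_def L2_set_def sum_nonneg)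

lemma least_squares_pythagoras:
  fixes X :: "real^'d::finite^'n::finite"
  assumes "(transpose X ** X) *v \<theta>hat = transpose X *v Y"
  shows "(norm (X *v \<theta> - Y))\<^sup>2 = (norm (X *v (\<theta> - \<theta>hat)))\<^sup>2 + (norm (X *v \<theta>hat - Y))\<^sup>2"
proof -
  have "transpose X *v (X *v \<theta>hat - Y) = 0"
    using assms by (simp add: matrix_vector_mult_diff_distrib matrix_vector_mul_assoc)
  then have orth: "inner (X *v (\<theta> - \<theta>hat)) (X *v \<theta>hat - Y) = 0"
    by (simp add: inner_mult_vec_transpose del: transpose_matrix_vector)
  have "(norm (X *v \<theta> - Y))\<^sup>2 = (norm (X *v (\<theta> - \<theta>hat) + (X *v \<theta>hat - Y)))\<^sup>2"
    by (simp add: matrix_vector_mult_diff_distrib)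
  also have "\<dots> = (norm (X *v (\<theta> - \<theta>hat)))\<^sup>2 + (norm (X *v \<theta>hat - Y))\<^sup>2"
    using orth by (simp only: norm_add_Pythagorean orthogonal_def)
  finally show ?thesis .
qed

lemma least_squares_loss_decomposition:
  fixes X :: "real^'d::finite^'n::finite"
  assumes gram: "(1 / real CARD('n)) *\<^sub>R (transpose X ** X)
                   = mat 1 + \<rho> *\<^sub>R (basis_outer i j + basis_outer j i)"
    and ls: "(transpose X ** X) *v \<theta>hat = transpose X *v Y"
  shows "(norm (X *v \<theta> - Y))\<^sup>2 / (2 * real CARD('n))
    = (norm (\<theta> - \<theta>hat))\<^sup>2 / 2 + \<rho> * (\<theta> $ i - \<theta>hat $ i) * (\<theta> $ j - \<theta>hat $ j)
      + (norm (X *v \<theta>hat - Y))\<^sup>2 / (2 * real CARD('n))"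
proof -
  define N where "N = real CARD('n)"
  define B where "B = basis_outer i j + basis_outer j i"
  define u where "u = \<theta> - \<theta>hat"
  have N: "0 < N" by (simp add: N_def)
  have "transpose X ** X = N *\<^sub>R ((1 / N) *\<^sub>R (transpose X ** X))"
    using N by simp
  also have "\<dots> = N *\<^sub>R (mat 1 + \<rho> *\<^sub>R B)"
    using gram by (simp add: N_def B_def)
  finally have gram': "transpose X ** X = N *\<^sub>R (mat 1 + \<rho> *\<^sub>R B)" .
  have "(norm (X *v u))\<^sup>2 = inner u ((N *\<^sub>R (mat 1 + \<rho> *\<^sub>R B)) *v u)"
    by (simp only: norm_mult_vec_sq gram')
  also have "\<dots> = N * ((norm u)\<^sup>2 + \<rho> * inner u (B *v u))"
    by (simp add: scaleR_matrix_vector_assoc[symmetric] matrix_vector_mult_add_rdistrib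
        inner_add_right power2_norm_eq_inner)
  also have "\<dots> = N * ((norm u)\<^sup>2 + 2 * \<rho> * u $ i * u $ j)"
    by (simp add: B_def inner_basis_outer_sym)
  finally have Xu: "(norm (X *v u))\<^sup>2 / (2 * N) = (norm u)\<^sup>2 / 2 + \<rho> * u $ i * u $ j"
    using N by (simp add: field_simps)
  have "(norm (X *v \<theta> - Y))\<^sup>2 / (2 * N)
      = (norm (X *v u))\<^sup>2 / (2 * N) + (norm (X *v \<theta>hat - Y))\<^sup>2 / (2 * N)"
    unfolding u_def least_squares_pythagoras[OF ls, of \<theta>] by (rule add_divide_distrib)
  then show ?thesis
    unfolding Xu by (simp add: N_def u_def)
qed

definition enet_pair_obj :: "real \<Rightarrow> real \<Rightarrow> real \<Rightarrow> real \<Rightarrow> real \<Rightarrow> real \<Rightarrow> real \<Rightarrow> real" where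
  "enet_pair_obj \<rho> lam l2 a0 b0 a b =
     (a - a0)\<^sup>2 / 2 + (b - b0)\<^sup>2 / 2 + \<rho> * (a - a0) * (b - b0) + lam * (\<bar>a\<bar> + \<bar>b\<bar>)
     + l2 / 2 * (a\<^sup>2 + b\<^sup>2)"

lemma mult_le_abs_of_abs_le_one:
  fixes s x :: real
  assumes "\<bar>s\<bar> \<le> 1"
  shows "s * x \<le> \<bar>x\<bar>"
proof -
  have "s * x \<le> \<bar>s\<bar> * \<bar>x\<bar>" by (metis abs_ge_self abs_mult)
  also have "\<dots> \<le> \<bar>x\<bar>" using assms by (simp add: mult_left_le_one_le)
  finally show ?thesis .
qed

lemma enet_pair_obj_kkt_point_unique_min:
  assumes "\<bar>\<rho>\<bar> < 1" "0 \<le> l2" "0 \<le> lam"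
    and sa: "\<bar>sa\<bar> \<le> 1" "sa * as = \<bar>as\<bar>" and sb: "\<bar>sb\<bar> \<le> 1" "sb * bs = \<bar>bs\<bar>"
    and kkt_a: "as - a0 + \<rho> * (bs - b0) + l2 * as = - lam * sa"
    and kkt_b: "bs - b0 + \<rho> * (as - a0) + l2 * bs = - lam * sb"
    and le: "enet_pair_obj \<rho> lam l2 a0 b0 a b \<le> enet_pair_obj \<rho> lam l2 a0 b0 as bs"
  shows "a = as \<and> b = bs"
proof -
  define da where "da = a - as"
  define db where "db = b - bs"
  define Q where "Q = (1 + l2) / 2 * (da\<^sup>2 + db\<^sup>2) + \<rho> * da * db"
  \<comment> \<open>Expanding around the KKT point leaves the quadratic form Q plus the nonnegative gaps
     \<open>lam * (\<bar>a\<bar> - sa * a)\<close> and \<open>lam * (\<bar>b\<bar> - sb * b)\<close>; for \<open>\<bar>\<rho>\<bar> < 1\<close> the form Q is positive definite.\<close>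
  have "enet_pair_obj \<rho> lam l2 a0 b0 a b - enet_pair_obj \<rho> lam l2 a0 b0 as bs
      = Q + (as - a0 + \<rho> * (bs - b0) + l2 * as) * da + (bs - b0 + \<rho> * (as - a0) + l2 * bs) * db
        + lam * (\<bar>a\<bar> + \<bar>b\<bar>) - lam * (\<bar>as\<bar> + \<bar>bs\<bar>)"
    unfolding enet_pair_obj_def Q_def da_def db_def power2_eq_square by (simp add: field_simps)
  also have "\<dots> = Q + lam * (\<bar>a\<bar> - sa * a) + lam * (\<bar>b\<bar> - sb * b)"
    unfolding kkt_a kkt_b sa(2)[symmetric] sb(2)[symmetric] da_def db_def by (simp add: algebra_simps)
  finally have "Q \<le> 0"
    using le mult_nonneg_nonneg[OF \<open>0 \<le> lam\<close>, of "\<bar>a\<bar> - sa * a"]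
      mult_nonneg_nonneg[OF \<open>0 \<le> lam\<close>, of "\<bar>b\<bar> - sb * b"]
      mult_le_abs_of_abs_le_one[OF sa(1), of a] mult_le_abs_of_abs_le_one[OF sb(1), of b]
    by linarith
  moreover have "(1 - \<bar>\<rho>\<bar>) / 2 * (da\<^sup>2 + db\<^sup>2) \<le> Q"
  proof -
    have "\<bar>2 * da * db\<bar> \<le> da\<^sup>2 + db\<^sup>2"
      using sum_squares_bound[of da db] sum_squares_bound[of da "- db"] by (simp add: abs_if)
    then have "\<bar>\<rho>\<bar> * \<bar>2 * da * db\<bar> \<le> \<bar>\<rho>\<bar> * (da\<^sup>2 + db\<^sup>2)"
      by (rule mult_left_mono) simp
    then have "\<bar>\<rho> * da * db\<bar> \<le> \<bar>\<rho>\<bar> / 2 * (da\<^sup>2 + db\<^sup>2)"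
      by (simp add: abs_mult field_simps)
    then have "0 \<le> \<rho> * da * db + \<bar>\<rho>\<bar> / 2 * (da\<^sup>2 + db\<^sup>2)"
      unfolding abs_le_iff by linarith
    moreover have "0 \<le> l2 / 2 * (da\<^sup>2 + db\<^sup>2)"
      using \<open>0 \<le> l2\<close> by simp
    moreover have "Q - (1 - \<bar>\<rho>\<bar>) / 2 * (da\<^sup>2 + db\<^sup>2)
        = (\<rho> * da * db + \<bar>\<rho>\<bar> / 2 * (da\<^sup>2 + db\<^sup>2)) + l2 / 2 * (da\<^sup>2 + db\<^sup>2)"
      unfolding Q_def by (simp add: field_simps)
    ultimately show ?thesis
      by (metis add_nonneg_nonneg diff_ge_0_iff_ge)
  qed
  ultimately have "(1 - \<bar>\<rho>\<bar>) / 2 * (da\<^sup>2 + db\<^sup>2) \<le> 0"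
    by linarith
  then have "da\<^sup>2 + db\<^sup>2 \<le> 0"
    using \<open>\<bar>\<rho>\<bar> < 1\<close> by (simp add: mult_le_0_iff)
  then show ?thesis
    by (simp add: da_def db_def sum_power2_le_zero_iff)
qed

lemma enet_pair_min_both_pos:
  assumes "0 \<le> \<rho>" "\<rho> < 1" "0 \<le> l2" "0 \<le> lam" "a0 < b0"
    and lam_lt: "lam < ((1 + l2 - \<rho>\<^sup>2) * a0 + l2 * \<rho> * b0) / (1 + l2 - \<rho>)"
    and min: "\<forall>x y. enet_pair_obj \<rho> lam l2 a0 b0 a b \<le> enet_pair_obj \<rho> lam l2 a0 b0 x y"
  shows "0 < a \<and> 0 < b"
proof -
  define thr where "thr = ((1 + l2 - \<rho>\<^sup>2) * a0 + l2 * \<rho> * b0) / (1 + l2 - \<rho>)"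
  have pos: "0 < 1 + l2 - \<rho>" "0 < 1 + l2 + \<rho>"
    using assms by auto
  \<comment> \<open>The stationary point of the smooth objective on the open positive quadrant.\<close>
  define as where "as = (thr - lam) / (1 + l2 + \<rho>)"
  define bs where "bs = as + (1 - \<rho>) * (b0 - a0) / (1 + l2 - \<rho>)"
  have as: "0 < as"
    using lam_lt pos by (simp add: as_def thr_def)
  have bs: "0 < bs"
    using as assms pos by (simp add: bs_def add_pos_pos)
  have as_eq: "(1 + l2 + \<rho>) * as = thr - lam"
    using pos by (simp add: as_def)
  have thr_eq: "(1 + l2 - \<rho>) * thr = (1 + l2 - \<rho>\<^sup>2) * a0 + l2 * \<rho> * b0"
    using pos by (simp add: thr_def)
  have bs_eq: "(1 + l2 - \<rho>) * (bs - as) = (1 - \<rho>) * (b0 - a0)"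
    using pos by (simp add: bs_def)
  have "(1 + l2 - \<rho>) * (as - a0 + \<rho> * (bs - b0) + l2 * as + lam) = 0"
    using as_eq thr_eq bs_eq by algebra
  then have "as - a0 + \<rho> * (bs - b0) + l2 * as = - lam * 1"
    using pos by simp
  moreover have "(1 + l2 - \<rho>) * (bs - b0 + \<rho> * (as - a0) + l2 * bs + lam) = 0"
    using as_eq thr_eq bs_eq by algebra
  then have "bs - b0 + \<rho> * (as - a0) + l2 * bs = - lam * 1"
    using pos by simp
  ultimately have "a = as \<and> b = bs"
    using min assms as bs
    by (intro enet_pair_obj_kkt_point_unique_min[of \<rho> l2 lam 1 as 1 bs a0 b0]) auto
  then show ?thesis
    using as bs by simp
qed

lemma enet_pair_min_first_zero:
  assumes "0 \<le> \<rho>" "\<rho> < 1" "0 \<le> l2" "0 < lam" "0 \<le> a0"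
    and lam_ge: "((1 + l2 - \<rho>\<^sup>2) * a0 + l2 * \<rho> * b0) / (1 + l2 - \<rho>) \<le> lam"
    and lam_lt: "lam < b0 + \<rho> * a0"
    and min: "\<forall>x y. enet_pair_obj \<rho> lam l2 a0 b0 a b \<le> enet_pair_obj \<rho> lam l2 a0 b0 x y"
  shows "a = 0 \<and> 0 < b"
proof -
  define q where "q = b0 + \<rho> * a0 - lam"
  define bs where "bs = q / (1 + l2)"
  \<comment> \<open>The candidate \<open>(0, bs)\<close> minimizes in b along \<open>a = 0\<close>; sa is the subgradient of \<open>\<bar>a\<bar>\<close> it requires.\<close>
  define sa where "sa = (a0 + \<rho> * (b0 - bs)) / lam"
  have q: "0 < q"
    using lam_lt by (simp add: q_def)
  have bs: "0 < bs" "bs \<le> q" "(1 + l2) * bs = q"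
    using q \<open>0 \<le> l2\<close> by (simp_all add: bs_def divide_le_eq)
  have "(1 + l2) * (a0 + \<rho> * (b0 - bs)) = (1 + l2 - \<rho>\<^sup>2) * a0 + l2 * \<rho> * b0 + \<rho> * lam"
    using \<open>0 \<le> l2\<close> unfolding bs_def q_def by (simp add: field_simps power2_eq_square)
  also have "\<dots> \<le> (1 + l2) * lam"
    using lam_ge assms by (simp add: pos_divide_le_eq algebra_simps)
  finally have "a0 + \<rho> * (b0 - bs) \<le> lam"
    using \<open>0 \<le> l2\<close> by simp
  moreover have "0 \<le> a0 + \<rho> * (b0 - bs)"
  proof -
    have "\<rho> * bs \<le> \<rho> * q"
      using bs(2) \<open>0 \<le> \<rho>\<close> by (simp add: mult_left_mono)
    moreover have "\<rho> * (\<rho> * a0) \<le> a0"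
      using assms mult_left_le_one_le[of a0 \<rho>] mult_left_le_one_le[of "\<rho> * a0" \<rho>] by simp
    moreover have "\<rho> * q = \<rho> * b0 + \<rho> * (\<rho> * a0) - \<rho> * lam"
      unfolding q_def by (simp add: algebra_simps)
    moreover have "0 \<le> \<rho> * lam"
      using assms by simp
    ultimately show ?thesis
      by (simp add: algebra_simps)
  qed
  ultimately have sa: "\<bar>sa\<bar> \<le> 1"
    using \<open>0 < lam\<close> by (simp add: sa_def)
  have "lam * sa = a0 + \<rho> * (b0 - bs)"
    using \<open>0 < lam\<close> by (simp add: sa_def)
  then have "0 - a0 + \<rho> * (bs - b0) + l2 * 0 = - lam * sa"
    unfolding minus_mult_left[symmetric] by (simp add: algebra_simps)
  moreover have "bs - b0 + \<rho> * (0 - a0) + l2 * bs = - lam * 1"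
    using bs(3) unfolding q_def by (simp add: algebra_simps)
  ultimately have "a = 0 \<and> b = bs"
    using min assms bs sa
    by (intro enet_pair_obj_kkt_point_unique_min[of \<rho> l2 lam sa 0 1 bs a0 b0]) auto
  then show ?thesis
    using bs by simp
qed

lemma enet_pair_min_both_zero:
  assumes "0 \<le> \<rho>" "\<rho> < 1" "0 \<le> l2" "0 < lam" "0 \<le> a0" "a0 \<le> b0"
    and lam_ge: "b0 + \<rho> * a0 \<le> lam"
    and min: "\<forall>x y. enet_pair_obj \<rho> lam l2 a0 b0 a b \<le> enet_pair_obj \<rho> lam l2 a0 b0 x y"
  shows "a = 0 \<and> b = 0"
proof (rule enet_pair_obj_kkt_point_unique_min
    [of \<rho> l2 lam "(a0 + \<rho> * b0) / lam" 0 "(b0 + \<rho> * a0) / lam" 0 a0 b0])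
  have "\<rho> * (b0 - a0) \<le> b0 - a0"
    using assms by (simp add: mult_left_le_one_le)
  then show "\<bar>(a0 + \<rho> * b0) / lam\<bar> \<le> 1" "\<bar>(b0 + \<rho> * a0) / lam\<bar> \<le> 1"
    using assms by (simp_all add: algebra_simps)
qed (use assms in auto)

lemma enet_obj_split_pair:
  fixes X :: "real^'d::finite^'n::finite"
  assumes gram: "(1 / real CARD('n)) *\<^sub>R (transpose X ** X)
                   = mat 1 + \<rho> *\<^sub>R (basis_outer i j + basis_outer j i)"
    and ls: "(transpose X ** X) *v \<theta>hat = transpose X *v Y"
    and "i \<noteq> j"
  shows "enet_obj X Y lam l2 \<theta>
    = enet_pair_obj \<rho> lam l2 (\<theta>hat $ i) (\<theta>hat $ j) (\<theta> $ i) (\<theta> $ j)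
      + (\<Sum>k\<in>UNIV - {i, j}. (\<theta> $ k - \<theta>hat $ k)\<^sup>2 / 2 + lam * \<bar>\<theta> $ k\<bar> + l2 / 2 * (\<theta> $ k)\<^sup>2)
      + (norm (X *v \<theta>hat - Y))\<^sup>2 / (2 * real CARD('n))"
proof -
  define G where "G = (\<lambda>k. (\<theta> $ k - \<theta>hat $ k)\<^sup>2 / 2 + lam * \<bar>\<theta> $ k\<bar> + l2 / 2 * (\<theta> $ k)\<^sup>2)"
  have "enet_obj X Y lam l2 \<theta> = (\<Sum>k\<in>UNIV. G k) + \<rho> * (\<theta> $ i - \<theta>hat $ i) * (\<theta> $ j - \<theta>hat $ j)
      + (norm (X *v \<theta>hat - Y))\<^sup>2 / (2 * real CARD('n))"
    unfolding enet_obj_def l1norm_def least_squares_loss_decomposition[OF gram ls, of \<theta>] G_def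
    by (simp add: norm_vec_power2 sum.distrib sum_distrib_left sum_divide_distrib)
  moreover have "(\<Sum>k\<in>UNIV. G k) = G i + G j + (\<Sum>k\<in>UNIV - {i, j}. G k)"
    using \<open>i \<noteq> j\<close> by (simp add: sum.subset_diff[of "{i, j}" UNIV])
  moreover have "G i + G j + \<rho> * (\<theta> $ i - \<theta>hat $ i) * (\<theta> $ j - \<theta>hat $ j)
      = enet_pair_obj \<rho> lam l2 (\<theta>hat $ i) (\<theta>hat $ j) (\<theta> $ i) (\<theta> $ j)"
    unfolding G_def enet_pair_obj_def by (simp add: algebra_simps)
  ultimately show ?thesis
    unfolding G_def by linarith
qed

lemma enet_obj_min_imp_enet_pair_min:
  fixes X :: "real^'d::finite^'n::finite"
  assumes gram: "(1 / real CARD('n)) *\<^sub>R (transpose X ** X)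
                   = mat 1 + \<rho> *\<^sub>R (basis_outer i j + basis_outer j i)"
    and ls: "(transpose X ** X) *v \<theta>hat = transpose X *v Y"
    and ij: "i \<noteq> j"
    and min: "\<forall>\<theta>. enet_obj X Y lam l2 \<theta>m \<le> enet_obj X Y lam l2 \<theta>"
  shows "\<forall>x y. enet_pair_obj \<rho> lam l2 (\<theta>hat $ i) (\<theta>hat $ j) (\<theta>m $ i) (\<theta>m $ j)
              \<le> enet_pair_obj \<rho> lam l2 (\<theta>hat $ i) (\<theta>hat $ j) x y"
proof (intro allI)
  fix x y
  define t where "t = (\<chi> k. if k = i then x else if k = j then y else \<theta>m $ k)"
  have ti: "t $ i = x" and tj: "t $ j = y"
    using ij by (simp_all add: t_def)
  have rest: "(\<Sum>k\<in>UNIV - {i, j}. (t $ k - \<theta>hat $ k)\<^sup>2 / 2 + lam * \<bar>t $ k\<bar> + l2 / 2 * (t $ k)\<^sup>2)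
      = (\<Sum>k\<in>UNIV - {i, j}. (\<theta>m $ k - \<theta>hat $ k)\<^sup>2 / 2 + lam * \<bar>\<theta>m $ k\<bar> + l2 / 2 * (\<theta>m $ k)\<^sup>2)"
    by (rule sum.cong) (auto simp: t_def)
  have "enet_obj X Y lam l2 \<theta>m \<le> enet_obj X Y lam l2 t"
    using min by blast
  then show "enet_pair_obj \<rho> lam l2 (\<theta>hat $ i) (\<theta>hat $ j) (\<theta>m $ i) (\<theta>m $ j)
      \<le> enet_pair_obj \<rho> lam l2 (\<theta>hat $ i) (\<theta>hat $ j) x y"
    unfolding enet_obj_split_pair[OF gram ls ij] ti tj rest by linarith
qed

lemma lasso_obj_eq_enet_obj: "lasso_obj X Y lam \<theta> = enet_obj X Y lam 0 \<theta>"
  by (simp add: lasso_obj_def enet_obj_def)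

theorem proposition5p1:
  fixes X :: "real^'d^'n" and \<theta>star \<theta>hat \<theta>1 \<theta>El :: "real^'d" and \<epsilon> Y :: "real^'n"
    and i j :: 'd and \<rho> lam1 lam2 :: real
  assumes zero_mean: "\<forall>k. (\<Sum>r\<in>UNIV. X $ r $ k) = 0"
    and ij: "i \<noteq> j"
    and rho: "0 < \<rho>" "\<rho> < 1"
    and gram: "(1 / real CARD('n)) *\<^sub>R (transpose X ** X)
                 = mat 1 + \<rho> *\<^sub>R (basis_outer i j + basis_outer j i)"
    and Y_def: "Y = X *v \<theta>star + \<epsilon>"
    and ls: "(transpose X ** X) *v \<theta>hat = transpose X *v Y"
    and hat_pos: "0 < \<theta>hat $ i" "\<theta>hat $ i < \<theta>hat $ j"
    and lam: "0 < lam1" "0 < lam2"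
    and lasso_min: "\<forall>\<theta>. lasso_obj X Y lam1 \<theta>1 \<le> lasso_obj X Y lam1 \<theta>"
    and enet_min: "\<forall>\<theta>. enet_obj X Y lam1 lam2 \<theta>El \<le> enet_obj X Y lam1 lam2 \<theta>"
  shows
    "(lam1 < (1 + \<rho>) * \<theta>hat $ i \<longrightarrow> \<theta>1 $ i > 0 \<and> \<theta>1 $ j > 0) \<and>
     ((1 + \<rho>) * \<theta>hat $ i \<le> lam1 \<and> lam1 < \<theta>hat $ j + \<rho> * \<theta>hat $ i
        \<longrightarrow> \<theta>1 $ i = 0 \<and> \<theta>1 $ j > 0) \<and>
     (lam1 \<ge> \<theta>hat $ j + \<rho> * \<theta>hat $ i \<longrightarrow> \<theta>1 $ i = 0 \<and> \<theta>1 $ j = 0) \<and>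
     (let c = ((1 + lam2 - \<rho>\<^sup>2) * \<theta>hat $ i + lam2 * \<rho> * \<theta>hat $ j) / (1 + lam2 - \<rho>) in
       (lam1 < c \<longrightarrow> \<theta>El $ i > 0 \<and> \<theta>El $ j > 0) \<and>
       (c \<le> lam1 \<and> lam1 < \<theta>hat $ j + \<rho> * \<theta>hat $ i \<longrightarrow> \<theta>El $ i = 0 \<and> \<theta>El $ j > 0) \<and>
       (lam1 \<ge> \<theta>hat $ j + \<rho> * \<theta>hat $ i \<longrightarrow> \<theta>El $ i = 0 \<and> \<theta>El $ j = 0))"
proof -
  have pair_lasso: "\<forall>x y. enet_pair_obj \<rho> lam1 0 (\<theta>hat $ i) (\<theta>hat $ j) (\<theta>1 $ i) (\<theta>1 $ j)
                        \<le> enet_pair_obj \<rho> lam1 0 (\<theta>hat $ i) (\<theta>hat $ j) x y"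
    using lasso_min by (intro enet_obj_min_imp_enet_pair_min[OF gram ls ij]) (simp add: lasso_obj_eq_enet_obj)
  have pair_enet: "\<forall>x y. enet_pair_obj \<rho> lam1 lam2 (\<theta>hat $ i) (\<theta>hat $ j) (\<theta>El $ i) (\<theta>El $ j)
                       \<le> enet_pair_obj \<rho> lam1 lam2 (\<theta>hat $ i) (\<theta>hat $ j) x y"
    using enet_min by (rule enet_obj_min_imp_enet_pair_min[OF gram ls ij])
  have lasso_threshold: "(1 - \<rho>\<^sup>2) * \<theta>hat $ i / (1 - \<rho>) = (1 + \<rho>) * \<theta>hat $ i"
    using rho by (simp add: power2_eq_square field_simps)
  define c where "c = ((1 + lam2 - \<rho>\<^sup>2) * \<theta>hat $ i + lam2 * \<rho> * \<theta>hat $ j) / (1 + lam2 - \<rho>)"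
  have rho': "0 \<le> \<rho>" and hat: "0 \<le> \<theta>hat $ i" "\<theta>hat $ i \<le> \<theta>hat $ j"
    using rho hat_pos by simp_all
  note lasso_cases =
    enet_pair_min_both_pos[OF rho' rho(2) order.refl less_imp_le[OF lam(1)] hat_pos(2) _ pair_lasso]
    enet_pair_min_first_zero[OF rho' rho(2) order.refl lam(1) hat(1) _ _ pair_lasso]
    enet_pair_min_both_zero[OF rho' rho(2) order.refl lam(1) hat _ pair_lasso]
  note enet_cases =
    enet_pair_min_both_pos[OF rho' rho(2) less_imp_le[OF lam(2)] less_imp_le[OF lam(1)] hat_pos(2) _ pair_enet]
    enet_pair_min_first_zero[OF rho' rho(2) less_imp_le[OF lam(2)] lam(1) hat(1) _ _ pair_enet]
    enet_pair_min_both_zero[OF rho' rho(2) less_imp_le[OF lam(2)] lam(1) hat _ pair_enet]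
  show ?thesis
    using lasso_cases enet_cases unfolding Let_def lasso_threshold[symmetric] by auto
qed

end
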